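(* Let $k\ge 1$, $l_0,l_1,\dots,l_k$ and $m_1,\dots,m_k$ be non-negative integers with $l_0>0$, $l_i\ge m_i$ for all $1\le i\le k$, and $l'>m'>0$, where $l'=\sum_{i=1}^k l_i$ and $m'=\sum_{i=1}^k m_i$. For a meromorphic function $f$ put $$P[f]=f^{l_0}(f^{l_1})^{(m_1)}(f^{l_2})^{(m_2)}\cdots (f^{l_k})^{(m_k)}.$$ Let $\omega\not\equiv 0$ be a polynomial of degree $m<l_0$, and let $f$ be a non-constant rational function whose poles, if any, all have multiplicity at least $l_0$. Then $P[f]-\omega$ has at least two distinct zeros in $\mathbb{C}$. *)

theory Defs
  imports "HOL-Analysis.Analysis" "HOL-Computational_Algebra.Polynomial"
begin

definition ratfun :: "complex poly \<Rightarrow> complex poly \<Rightarrow> complex \<Rightarrow> complex" where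
  "ratfun p q = (\<lambda>z. poly p z / poly q z)"

definition Pdiff :: "nat \<Rightarrow> (nat \<Rightarrow> nat) \<Rightarrow> (nat \<Rightarrow> nat) \<Rightarrow> (complex \<Rightarrow> complex) \<Rightarrow> complex \<Rightarrow> complex" where
  "Pdiff k l m f z = f z ^ l 0 * (\<Prod>i=1..k. (deriv ^^ m i) (\<lambda>w. f w ^ l i) z)"

end

theory Submission
  imports Defs "HOL-Computational_Algebra.Fundamental_Theorem_Algebra"
begin

text \<open>
  Write f = p / q in lowest terms and put D = deg q, L = \<Sum> l i, M = \<Sum> m i. Then
  P[f] = A / q^S with S = l 0 + L + M, and off the poles the zeros of P[f] - \<omega> are those
  of E = A - \<omega> q^S. Suppose they all equal one point a. As deg \<omega> < l 0, the (l 0)-th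
  derivative of P[f] - \<omega> is that of P[f], namely Y / q^(S + l 0), and Y \<noteq> 0 by a degree
  count at infinity. All zeros of E and q lie in T = {a} \<union> q\<inverse>(0), so for r = \<Prod>z\<in>T. (x - z)
  both r E'/E and r q'/q are polynomials, hence so is r^(l 0) g^(l 0) / g for g = E / q^S:
  Y r^(l 0) = E q^(l 0) V for a polynomial V. Every zero z of p is a zero of A of order at
  least l 0, so E vanishes there to order less than l 0, which (x - z)^(l 0) absorbs; as
  p^(L - M) divides Y, it divides V. Since the poles have order at least l 0, l 0 |T| \<le> D + l 0,
  and comparing degrees in Y r^(l 0) = E q^(l 0) V gives a contradiction.
\<close>

section \<open>Derivatives of quotients A / q^s\<close>

text \<open>(A / q^s)' = quot_deriv q s A / q^(s + 1) and
  (A / q^s)^(j) = higher_quot_deriv q A s j / q^(s + j) wherever q does not vanish.\<close>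
definition quot_deriv :: "complex poly \<Rightarrow> nat \<Rightarrow> complex poly \<Rightarrow> complex poly" where
  "quot_deriv q s A = pderiv A * q - smult (of_nat s) (A * pderiv q)"

fun higher_quot_deriv :: "complex poly \<Rightarrow> complex poly \<Rightarrow> nat \<Rightarrow> nat \<Rightarrow> complex poly" where
  "higher_quot_deriv q A s 0 = A"
| "higher_quot_deriv q A s (Suc j) = quot_deriv q (s + j) (higher_quot_deriv q A s j)"

lemma quot_deriv_0 [simp]: "quot_deriv q s 0 = 0"
  by (simp add: quot_deriv_def)

lemma higher_quot_deriv_0 [simp]: "higher_quot_deriv q 0 s j = 0"
  by (induction j) auto

lemma DERIV_quot_power:
  fixes A q :: "complex poly"
  assumes "poly q z \<noteq> 0"
  shows "((\<lambda>w. poly A w / poly q w ^ s) has_field_derivative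
           poly (quot_deriv q s A) z / poly q z ^ Suc s) (at z)"
proof -
  have "((\<lambda>w. poly A w / poly (q ^ s) w) has_field_derivative
         (poly (pderiv A) z * poly (q ^ s) z - poly A z * poly (pderiv (q ^ s)) z) /
           (poly (q ^ s) z * poly (q ^ s) z)) (at z)"
    using assms by (intro DERIV_divide poly_DERIV) simp
  moreover have "(poly (pderiv A) z * poly (q ^ s) z - poly A z * poly (pderiv (q ^ s)) z) /
      (poly (q ^ s) z * poly (q ^ s) z) = poly (quot_deriv q s A) z / poly q z ^ Suc s"
  proof (cases s)
    case (Suc s')
    have "poly (pderiv (q ^ s)) z = of_nat s * poly q z ^ s' * poly (pderiv q) z"
      unfolding Suc pderiv_power_Suc by simp
    then show ?thesis
      using assms unfolding Suc by (simp add: quot_deriv_def field_simps)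
  qed (use assms in \<open>simp add: quot_deriv_def\<close>)
  ultimately show ?thesis
    by simp
qed

lemma higher_deriv_quot_power:
  fixes A q :: "complex poly"
  assumes "poly q z \<noteq> 0"
  shows "(deriv ^^ j) (\<lambda>w. poly A w / poly q w ^ s) z
    = poly (higher_quot_deriv q A s j) z / poly q z ^ (s + j)"
  using assms
proof (induction j arbitrary: z)
  case (Suc j)
  have "open {w. poly q w \<noteq> 0}"
    by (intro open_Collect_neq continuous_intros)
  then have "eventually (\<lambda>w. w \<in> {w. poly q w \<noteq> 0}) (nhds z)"
    using Suc.prems by (intro eventually_nhds_in_open) auto
  then have "eventually (\<lambda>w. (deriv ^^ j) (\<lambda>w. poly A w / poly q w ^ s) w
      = poly (higher_quot_deriv q A s j) w / poly q w ^ (s + j)) (nhds z)"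
    by eventually_elim (use Suc.IH in auto)
  then have "(deriv ^^ Suc j) (\<lambda>w. poly A w / poly q w ^ s) z
      = deriv (\<lambda>w. poly (higher_quot_deriv q A s j) w / poly q w ^ (s + j)) z"
    by (simp add: deriv_cong_ev)
  also have "\<dots> = poly (higher_quot_deriv q A s (Suc j)) z / poly q z ^ (s + Suc j)"
    using DERIV_imp_deriv[OF DERIV_quot_power[OF Suc.prems]] by simp
  finally show ?case .
qed simp

lemma quot_deriv_diff: "quot_deriv q s (A - B) = quot_deriv q s A - quot_deriv q s B"
  by (simp add: quot_deriv_def pderiv_diff algebra_simps smult_diff_right)

lemma higher_quot_deriv_diff:
  "higher_quot_deriv q (A - B) s j = higher_quot_deriv q A s j - higher_quot_deriv q B s j"
  by (induction j) (auto simp: quot_deriv_diff)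

lemma quot_deriv_smult: "quot_deriv q s (smult c A) = smult c (quot_deriv q s A)"
  by (simp add: quot_deriv_def pderiv_smult algebra_simps smult_diff_right)

lemma higher_quot_deriv_Suc_left:
  "higher_quot_deriv q A s (Suc j) = higher_quot_deriv q (quot_deriv q s A) (Suc s) j"
  by (induction j) auto

lemma quot_deriv_mult_power: "quot_deriv q s (B * q ^ s) = pderiv B * q ^ Suc s"
proof (cases s)
  case 0
  then show ?thesis by (simp add: quot_deriv_def)
next
  case (Suc s')
  have "pderiv (q ^ Suc s') = smult (of_nat (Suc s')) (q ^ s' * pderiv q)"
    by (simp only: pderiv_power_Suc mult_smult_left)
  then show ?thesis
    unfolding quot_deriv_def Suc pderiv_mult
    by (simp add: distrib_right distrib_left mult.commute mult.left_commute)
qed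

lemma higher_quot_deriv_mult_power:
  "higher_quot_deriv q (B * q ^ s) s j = (pderiv ^^ j) B * q ^ (s + j)"
  by (induction j) (simp_all add: quot_deriv_mult_power)

lemma higher_pderiv_eq_0:
  fixes p :: "'a::{comm_semiring_1,semiring_no_zero_divisors,semiring_char_0} poly"
  shows "degree p < n \<Longrightarrow> (pderiv ^^ n) p = 0"
proof (cases n)
  case (Suc n')
  assume "degree p < n"
  then have "degree ((pderiv ^^ n') p) = 0"
    using Suc degree_higher_pderiv[of n' p] by simp
  then show ?thesis
    using Suc by (simp add: pderiv_eq_0_iff)
qed simp

lemma higher_quot_deriv_diff_low_degree:
  assumes "degree \<omega> < j"
  shows "higher_quot_deriv q (A - \<omega> * q ^ s) s j = higher_quot_deriv q A s j"
  using assms by (simp add: higher_quot_deriv_diff higher_quot_deriv_mult_power higher_pderiv_eq_0)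

lemma power_dvd_pderiv:
  fixes p A :: "'a::idom poly"
  assumes "p ^ k dvd A"
  shows "p ^ (k - 1) dvd pderiv A"
proof -
  obtain B where B: "A = p ^ k * B"
    using assms by blast
  have "pderiv A = p ^ (k - 1) * (smult (of_nat k) (B * pderiv p)) + p ^ k * pderiv B"
    unfolding B pderiv_mult pderiv_power by (simp add: algebra_simps)
  also have "p ^ (k - 1) dvd \<dots>"
    by (intro dvd_add dvd_mult2 le_imp_power_dvd dvd_triv_left) auto
  finally show ?thesis .
qed

lemma power_dvd_higher_quot_deriv:
  assumes "p ^ k dvd A"
  shows "p ^ (k - j) dvd higher_quot_deriv q A s j"
proof (induction j)
  case (Suc j)
  have "p ^ (k - j - 1) dvd p ^ (k - j)"
    by (rule le_imp_power_dvd) simp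
  then have "p ^ (k - j - 1) dvd smult (of_nat (s + j)) (higher_quot_deriv q A s j * pderiv q)"
    using Suc.IH by (auto simp: dvd_smult intro: dvd_trans dvd_mult2)
  moreover have "p ^ (k - j - 1) dvd pderiv (higher_quot_deriv q A s j) * q"
    using power_dvd_pderiv[OF Suc.IH] by simp
  ultimately show ?case
    by (simp add: quot_deriv_def)
qed (simp add: assms)

lemma quot_deriv_power: "quot_deriv q l (p ^ l) = smult (of_nat l) (p ^ (l - 1) * quot_deriv q 1 p)"
proof (cases l)
  case (Suc l')
  have "quot_deriv q l (p ^ l) = smult (of_nat (Suc l')) (p ^ l') * pderiv p * q
      - smult (of_nat (Suc l')) (p ^ Suc l' * pderiv q)"
    unfolding quot_deriv_def Suc by (simp only: pderiv_power_Suc)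
  then show ?thesis
    unfolding quot_deriv_def Suc
    by (simp add: smult_diff_right right_diff_distrib mult.commute mult.left_commute)
qed (simp add: quot_deriv_def)

section \<open>Degrees at infinity\<close>

lemma degree_pderiv_mult_le: "degree (pderiv A * q) \<le> degree A + degree q - 1"
  for A q :: "'a::{idom,ring_char_0} poly"
proof (cases "degree A = 0")
  case True
  then show ?thesis by (simp add: iffD2[OF pderiv_eq_0_iff])
next
  case False
  then show ?thesis
    using degree_mult_le[of "pderiv A" q] by (simp add: degree_pderiv)
qed

lemma coeff_pderiv_mult_top:
  fixes A q :: "'a::{idom,ring_char_0} poly"
  assumes "degree A + degree q \<ge> 1"
  shows "coeff (pderiv A * q) (degree A + degree q - 1) = of_nat (degree A) * lead_coeff A * lead_coeff q"
proof (cases "degree A = 0")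
  case True
  then show ?thesis by (simp add: iffD2[OF pderiv_eq_0_iff])
next
  case False
  then have "degree A + degree q - 1 = degree (pderiv A) + degree q"
    by (simp add: degree_pderiv)
  moreover have "lead_coeff (pderiv A) = of_nat (degree A) * lead_coeff A"
    using False by (simp add: degree_pderiv coeff_pderiv)
  ultimately show ?thesis
    by (simp add: coeff_mult_degree_sum)
qed

lemma degree_quot_deriv_le: "degree (quot_deriv q s A) \<le> degree A + degree q - 1"
  unfolding quot_deriv_def
  using degree_pderiv_mult_le[of A q] degree_pderiv_mult_le[of q A]
  by (intro degree_diff_le) (auto simp: mult.commute add.commute intro: order.trans[OF degree_smult_le])

lemma degree_quot_deriv_less:
  assumes "quot_deriv q s A \<noteq> 0"
  shows "degree (quot_deriv q s A) < degree A + degree q"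
proof -
  have "degree A + degree q \<noteq> 0"
  proof
    assume "degree A + degree q = 0"
    then have "pderiv A = 0" "pderiv q = 0"
      by (auto intro: iffD2[OF pderiv_eq_0_iff])
    then show False
      using assms by (simp add: quot_deriv_def)
  qed
  then show ?thesis
    using degree_quot_deriv_le[of q s A] by linarith
qed

text \<open>The top coefficient of (A / q^s)' cancels only when A / q^s has degree 0 at infinity.\<close>
lemma quot_deriv_exact:
  assumes "A \<noteq> 0" "q \<noteq> 0" "degree A \<noteq> s * degree q"
  shows "quot_deriv q s A \<noteq> 0 \<and> degree (quot_deriv q s A) + 1 = degree A + degree q"
proof -
  have ge: "degree A + degree q \<ge> 1"
    using assms(3) by (cases "degree A") auto
  have "coeff (quot_deriv q s A) (degree A + degree q - 1)
      = (of_nat (degree A) - of_nat s * of_nat (degree q)) * lead_coeff A * lead_coeff q"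
    using coeff_pderiv_mult_top[OF ge] coeff_pderiv_mult_top[of q A] ge
    by (simp add: quot_deriv_def algebra_simps)
  also have "\<dots> \<noteq> 0"
    using assms by (simp flip: of_nat_mult)
  finally have c: "coeff (quot_deriv q s A) (degree A + degree q - 1) \<noteq> 0" .
  then have "degree A + degree q - 1 \<le> degree (quot_deriv q s A)"
    by (rule le_degree)
  with c degree_quot_deriv_le[of q s A] ge show ?thesis
    by auto
qed

lemma degree_higher_quot_deriv_le:
  assumes "higher_quot_deriv q A s j \<noteq> 0"
  shows "degree (higher_quot_deriv q A s j) + j \<le> degree A + j * degree q"
  using assms
proof (induction j)
  case (Suc j)
  then have "higher_quot_deriv q A s j \<noteq> 0"
    by auto
  then show ?case
    using Suc degree_quot_deriv_less[of q "s + j" "higher_quot_deriv q A s j"] by simp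
qed simp

text \<open>The order at infinity of A / q^s, which is s deg q - deg A, increases by exactly one
  under each differentiation at which it is nonzero.\<close>
lemma higher_quot_deriv_exact:
  assumes "A \<noteq> 0" "q \<noteq> 0" "degree A < s * degree q \<or> s * degree q + j \<le> degree A"
  shows "higher_quot_deriv q A s j \<noteq> 0 \<and>
    degree (higher_quot_deriv q A s j) + j = degree A + j * degree q"
  using assms(3)
proof (induction j)
  case (Suc j)
  then have ih: "higher_quot_deriv q A s j \<noteq> 0"
     "degree (higher_quot_deriv q A s j) + j = degree A + j * degree q"
    by auto
  then have "degree (higher_quot_deriv q A s j) \<noteq> (s + j) * degree q"
    using Suc.prems by (auto simp: algebra_simps)
  from quot_deriv_exact[OF ih(1) assms(2) this] ih(2) show ?case
    by simp
qed (simp add: assms(1))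

lemma quot_deriv_1_eq_0_imp_smult:
  fixes p q :: "complex poly"
  assumes "p \<noteq> 0" "q \<noteq> 0" "quot_deriv q 1 p = 0"
  shows "\<exists>c. p = smult c q"
proof -
  have deg: "degree p = degree q"
    using quot_deriv_exact[of p q 1] assms by force
  define r where "r = p - smult (lead_coeff p / lead_coeff q) q"
  have "quot_deriv q 1 q = 0"
    by (simp add: quot_deriv_def mult.commute)
  then have r0: "quot_deriv q 1 r = 0"
    using assms(3) by (simp add: r_def quot_deriv_diff quot_deriv_smult)
  have "degree r < degree q \<or> r = 0"
  proof -
    have "degree r \<le> degree q"
      unfolding r_def using deg by (metis degree_diff_le degree_smult_le le_refl)
    moreover have "coeff r (degree q) = 0"
      unfolding r_def using assms(2) deg by simp
    ultimately show ?thesis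
      by (metis le_neq_implies_less leading_coeff_0_iff)
  qed
  then have "r = 0"
    using quot_deriv_exact[of r q 1] assms(2) r0 by fastforce
  then show ?thesis
    unfolding r_def by auto
qed

section \<open>Logarithmic derivatives and zero orders\<close>

lemma dvd_pderiv_mult_cofactor:
  assumes "F dvd pderiv F * r"
  shows "F dvd pderiv (F * W) * r"
proof -
  have "pderiv (F * W) * r = F * (pderiv W * r) + W * (pderiv F * r)"
    by (simp add: pderiv_mult distrib_right mult.assoc)
  then show ?thesis
    using assms by simp
qed

lemma dvd_pderiv_mult_mult:
  assumes "F dvd pderiv F * r" "G dvd pderiv G * r"
  shows "F * G dvd pderiv (F * G) * r"
proof -
  have "pderiv (F * G) * r = F * (pderiv G * r) + G * (pderiv F * r)"
    by (simp add: pderiv_mult distrib_right mult.assoc)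
  then show ?thesis
    using assms by (simp add: mult_dvd_mono mult.commute[of G])
qed

lemma dvd_pderiv_power:
  assumes "F dvd pderiv F * r"
  shows "F ^ j dvd pderiv (F ^ j) * r"
  by (induction j) (simp_all add: dvd_pderiv_mult_mult assms)

text \<open>With f = E / q^s: if r E'/E and r q'/q are polynomials, then so is r^j f^(j) / f.\<close>
lemma mult_power_dvd_higher_quot_deriv:
  assumes "E dvd pderiv E * r" "q dvd pderiv q * r"
  shows "E * q ^ j dvd higher_quot_deriv q E s j * r ^ j"
proof (induction j)
  case (Suc j)
  define Y where "Y = higher_quot_deriv q E s j"
  from Suc.IH obtain W where W: "Y * r ^ j = E * q ^ j * W"
    unfolding Y_def by blast
  have "E * q ^ j dvd pderiv (E * q ^ j) * r"
    using assms by (simp add: dvd_pderiv_mult_mult dvd_pderiv_power)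
  then have "E * q ^ j dvd pderiv (Y * r ^ j) * r"
    unfolding W by (rule dvd_pderiv_mult_cofactor)
  moreover have "E * q ^ j dvd Y * pderiv (r ^ j) * r"
  proof (cases j)
    case (Suc j')
    have "Y * pderiv (r ^ j) * r = smult (of_nat j) (Y * r ^ j * pderiv r)"
      unfolding Suc pderiv_power_Suc by (simp add: mult.assoc mult.commute mult.left_commute)
    then show ?thesis
      unfolding W by (simp add: dvd_smult mult.assoc)
  qed simp
  moreover have "pderiv Y * r ^ Suc j = pderiv (Y * r ^ j) * r - Y * pderiv (r ^ j) * r"
    by (simp add: pderiv_mult algebra_simps)
  ultimately have "E * q ^ j dvd pderiv Y * r ^ Suc j"
    by simp
  then have "E * q ^ Suc j dvd q * (pderiv Y * r ^ Suc j)"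
    by (simp add: mult_dvd_mono mult_ac)
  moreover have "E * q ^ Suc j dvd (Y * r ^ j) * (pderiv q * r)"
    using mult_dvd_mono[OF Suc.IH[folded Y_def] assms(2)] by (simp add: mult_ac)
  moreover have "higher_quot_deriv q E s (Suc j) * r ^ Suc j =
      q * (pderiv Y * r ^ Suc j) - smult (of_nat (s + j)) ((Y * r ^ j) * (pderiv q * r))"
    unfolding Y_def by (simp add: quot_deriv_def algebra_simps)
  ultimately show ?case
    by (simp add: dvd_smult)
qed simp

lemma order_power: "p \<noteq> 0 \<Longrightarrow> order z (p ^ n) = n * order z p"
  by (induction n) (simp_all add: order_mult order_0I)

lemma dvd_if_order_le:
  fixes p V :: "complex poly"
  assumes "p \<noteq> 0" "V \<noteq> 0" "\<And>z. order z p \<le> order z V"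
  shows "p dvd V"
  using assms
proof (induction p arbitrary: V rule: poly_root_order_induct)
  case (no_roots p)
  then have "degree p = 0"
    using alg_closed_imp_poly_has_root[of p] by auto
  then show ?case
    using no_roots by (metis is_unit_iff_degree unit_imp_dvd)
next
  case (root p x n)
  then have p0: "p \<noteq> 0" by auto
  have "order x ([:-x, 1:] ^ n * p) = n"
    using p0 root.hyps(2) by (simp add: order_mult order_power_n_n order_0I)
  then obtain V0 where V0: "V = [:-x, 1:] ^ n * V0"
    using root.prems(3)[of x] by (metis dvdE order_divides)
  have "order z p \<le> order z V0" for z
  proof (cases "z = x")
    case True
    then show ?thesis using root.hyps(2) by (simp add: order_0I)
  next
    case False
    then have "order z ([:-x, 1:] ^ n) = 0"
      by (intro order_0I) auto
    then show ?thesis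
      using root.prems p0 unfolding V0 by (metis add_0 order_mult)
  qed
  then have "p dvd V0"
    using root.IH p0 root.prems(2) V0 by auto
  then show ?case
    unfolding V0 by simp
qed simp

definition vanishing_poly :: "complex set \<Rightarrow> complex poly" where
  "vanishing_poly T = (\<Prod>z\<in>T. [:-z, 1:])"

lemma vanishing_poly_nonzero: "finite T \<Longrightarrow> vanishing_poly T \<noteq> 0"
  unfolding vanishing_poly_def by auto

lemma degree_vanishing_poly: "finite T \<Longrightarrow> degree (vanishing_poly T) = card T"
  unfolding vanishing_poly_def by (subst degree_prod_eq_sum_degree) auto

lemma order_vanishing_poly: "finite T \<Longrightarrow> z \<in> T \<Longrightarrow> order z (vanishing_poly T) \<ge> 1"
  using vanishing_poly_nonzero[of T] order_divides[of z 1 "vanishing_poly T"]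
  unfolding vanishing_poly_def by auto

lemma dvd_pderiv_mult_vanishing_poly:
  fixes E :: "complex poly"
  assumes "finite T" "E \<noteq> 0" "\<And>z. poly E z = 0 \<Longrightarrow> z \<in> T"
  shows "E dvd pderiv E * vanishing_poly T"
proof (cases "pderiv E = 0")
  case False
  have "order z E \<le> order z (pderiv E * vanishing_poly T)" for z
  proof (cases "poly E z = 0")
    case True
    then have "order z E = Suc (order z (pderiv E))"
      using assms(2) by (simp add: order_pderiv)
    moreover have "order z (vanishing_poly T) \<ge> 1"
      using assms(1) assms(3)[OF True] by (rule order_vanishing_poly)
    ultimately show ?thesis
      using False vanishing_poly_nonzero[OF assms(1)] by (simp add: order_mult)
  qed (simp add: order_0I)
  then show ?thesis
    using False vanishing_poly_nonzero[OF assms(1)] assms(2) by (simp add: dvd_if_order_le)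
qed simp

section \<open>The numerator of P[p / q]\<close>

definition Pdiff_numer ::
    "nat \<Rightarrow> (nat \<Rightarrow> nat) \<Rightarrow> (nat \<Rightarrow> nat) \<Rightarrow> complex poly \<Rightarrow> complex poly \<Rightarrow> complex poly" where
  "Pdiff_numer k l m p q = p ^ l 0 * (\<Prod>i=1..k. higher_quot_deriv q (p ^ l i) (l i) (m i))"

definition Pdiff_weight :: "nat \<Rightarrow> (nat \<Rightarrow> nat) \<Rightarrow> (nat \<Rightarrow> nat) \<Rightarrow> nat" where
  "Pdiff_weight k l m = l 0 + (\<Sum>i=1..k. l i) + (\<Sum>i=1..k. m i)"

lemma Pdiff_ratfun:
  assumes "poly q z \<noteq> 0"
  shows "Pdiff k l m (ratfun p q) z = poly (Pdiff_numer k l m p q) z / poly q z ^ Pdiff_weight k l m"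
proof -
  have pow: "(\<lambda>w. ratfun p q w ^ n) = (\<lambda>w. poly (p ^ n) w / poly q w ^ n)" for n
    by (simp add: ratfun_def power_divide)
  have "Pdiff k l m (ratfun p q) z = (poly p z / poly q z) ^ l 0 *
      (\<Prod>i=1..k. poly (higher_quot_deriv q (p ^ l i) (l i) (m i)) z / poly q z ^ (l i + m i))"
    unfolding Pdiff_def pow higher_deriv_quot_power[OF assms] by (simp add: ratfun_def)
  also have "\<dots> = poly (Pdiff_numer k l m p q) z / poly q z ^ Pdiff_weight k l m"
    by (simp add: Pdiff_numer_def Pdiff_weight_def prod_dividef power_sum power_divide poly_prod
        power_add sum.distrib prod.distrib)
  finally show ?thesis .
qed

lemma higher_quot_deriv_power_exact:
  assumes "p \<noteq> 0" "q \<noteq> 0" "degree q < degree p" "m \<le> l"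
  shows "higher_quot_deriv q (p ^ l) l m \<noteq> 0 \<and>
    degree (higher_quot_deriv q (p ^ l) l m) + m = l * degree p + m * degree q"
proof -
  have "l * (degree q + 1) \<le> l * degree p"
    using assms(3) by (intro mult_le_mono2) simp
  then have "l * degree q + m \<le> degree (p ^ l)"
    using assms(1,4) by (simp add: degree_power_eq)
  from higher_quot_deriv_exact[of "p ^ l" q l m] this assms(1,2) show ?thesis
    by (simp add: degree_power_eq)
qed

lemma higher_quot_deriv_power_nonzero:
  assumes "p \<noteq> 0" "q \<noteq> 0" "quot_deriv q 1 p \<noteq> 0" "m \<le> l"
  shows "higher_quot_deriv q (p ^ l) l m \<noteq> 0"
proof -
  consider "degree q < degree p" | "m = 0" | "degree p \<le> degree q" "0 < m"
    by linarith
  then show ?thesis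
  proof cases
    case 1
    then show ?thesis
      using assms higher_quot_deriv_power_exact by blast
  next
    case 2
    then show ?thesis
      using assms(1) by simp
  next
    case 3
    define B where "B = quot_deriv q l (p ^ l)"
    have "B \<noteq> 0"
      using 3 assms by (simp add: B_def quot_deriv_power)
    moreover have "degree B < l * degree q + degree q"
      using degree_quot_deriv_less[of q l "p ^ l"] \<open>B \<noteq> 0\<close> 3 assms(1)
      by (simp add: B_def degree_power_eq order.strict_trans2)
    ultimately have "higher_quot_deriv q B (Suc l) (m - 1) \<noteq> 0"
      using higher_quot_deriv_exact[of B q "Suc l" "m - 1"] assms(2) by simp
    then show ?thesis
      using 3 higher_quot_deriv_Suc_left[of q "p ^ l" l "m - 1"] by (simp add: B_def)
  qed
qed

lemma
  assumes "p \<noteq> 0" "q \<noteq> 0" "quot_deriv q 1 p \<noteq> 0" "\<forall>i\<in>{1..k}. m i \<le> l i"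
  shows Pdiff_numer_nonzero: "Pdiff_numer k l m p q \<noteq> 0"
    and degree_Pdiff_numer:
      "degree (Pdiff_numer k l m p q) = l 0 * degree p +
         (\<Sum>i=1..k. degree (higher_quot_deriv q (p ^ l i) (l i) (m i)))"
  using assms higher_quot_deriv_power_nonzero
  by (auto simp: Pdiff_numer_def degree_mult_eq degree_power_eq degree_prod_eq_sum_degree)

lemma degree_Pdiff_numer_le:
  assumes "p \<noteq> 0" "q \<noteq> 0" "quot_deriv q 1 p \<noteq> 0" "\<forall>i\<in>{1..k}. m i \<le> l i"
  shows "degree (Pdiff_numer k l m p q) + (\<Sum>i=1..k. m i)
    \<le> (l 0 + (\<Sum>i=1..k. l i)) * degree p + (\<Sum>i=1..k. m i) * degree q"
proof -
  have "degree (higher_quot_deriv q (p ^ l i) (l i) (m i)) + m i \<le> l i * degree p + m i * degree q"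
    if "i \<in> {1..k}" for i
    using degree_higher_quot_deriv_le[of q "p ^ l i" "l i" "m i"] that assms
      higher_quot_deriv_power_nonzero by (simp add: degree_power_eq)
  then have "(\<Sum>i=1..k. degree (higher_quot_deriv q (p ^ l i) (l i) (m i)) + m i)
      \<le> (\<Sum>i=1..k. l i * degree p + m i * degree q)"
    by (rule sum_mono)
  then show ?thesis
    using assms by (simp add: degree_Pdiff_numer sum.distrib sum_distrib_right[symmetric]
        distrib_right)
qed

lemma degree_Pdiff_numer_eq:
  assumes "p \<noteq> 0" "q \<noteq> 0" "quot_deriv q 1 p \<noteq> 0" "\<forall>i\<in>{1..k}. m i \<le> l i"
    and "degree q < degree p"
  shows "degree (Pdiff_numer k l m p q) + (\<Sum>i=1..k. m i)
    = (l 0 + (\<Sum>i=1..k. l i)) * degree p + (\<Sum>i=1..k. m i) * degree q"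
proof -
  have "(\<Sum>i=1..k. degree (higher_quot_deriv q (p ^ l i) (l i) (m i)) + m i)
      = (\<Sum>i=1..k. l i * degree p + m i * degree q)"
    by (intro sum.cong refl) (use higher_quot_deriv_power_exact[OF assms(1,2,5)] assms(4) in auto)
  then show ?thesis
    using assms(1-4) by (simp add: degree_Pdiff_numer sum.distrib sum_distrib_right[symmetric]
        distrib_right)
qed

lemma higher_quot_deriv_Pdiff_numer_nonzero:
  assumes "p \<noteq> 0" "q \<noteq> 0" "quot_deriv q 1 p \<noteq> 0" "\<forall>i\<in>{1..k}. m i \<le> l i"
    and "(\<Sum>i=1..k. m i) < (\<Sum>i=1..k. l i)" "0 < (\<Sum>i=1..k. m i)"
  shows "higher_quot_deriv q (Pdiff_numer k l m p q) (Pdiff_weight k l m) (l 0) \<noteq> 0"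
proof -
  let ?L = "\<Sum>i=1..k. l i" and ?M = "\<Sum>i=1..k. m i" and ?A = "Pdiff_numer k l m p q"
  have S: "Pdiff_weight k l m * degree q = (l 0 + ?L) * degree q + ?M * degree q"
    by (simp add: Pdiff_weight_def algebra_simps)
  have "degree ?A < Pdiff_weight k l m * degree q \<or>
      Pdiff_weight k l m * degree q + l 0 \<le> degree ?A"
  proof (cases "degree q < degree p")
    case True
    have "(l 0 + ?L) * degree q + (l 0 + ?L) \<le> (l 0 + ?L) * degree p"
      using mult_le_mono2[of "degree q + 1" "degree p" "l 0 + ?L"] True by simp
    then have "Pdiff_weight k l m * degree q + l 0 \<le> degree ?A"
      using degree_Pdiff_numer_eq[OF assms(1-4) True] assms(5) S by linarith
    then show ?thesis ..
  next
    case False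
    then have "(l 0 + ?L) * degree p \<le> (l 0 + ?L) * degree q"
      by simp
    then have "degree ?A < Pdiff_weight k l m * degree q"
      using degree_Pdiff_numer_le[OF assms(1-4)] assms(6) S by linarith
    then show ?thesis ..
  qed
  then show ?thesis
    using higher_quot_deriv_exact[OF Pdiff_numer_nonzero[OF assms(1-4)] assms(2)] by blast
qed

lemma power_dvd_Pdiff_numer: "p ^ (l 0 + (\<Sum>i=1..k. l i - m i)) dvd Pdiff_numer k l m p q"
proof -
  have "(\<Prod>i=1..k. p ^ (l i - m i)) dvd (\<Prod>i=1..k. higher_quot_deriv q (p ^ l i) (l i) (m i))"
    by (intro prod_dvd_prod power_dvd_higher_quot_deriv) simp
  then show ?thesis
    by (simp add: Pdiff_numer_def power_add power_sum mult_dvd_mono)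
qed

lemma ratfun_nonconstant:
  assumes "q \<noteq> 0" "\<not> (\<exists>c. \<forall>z. poly q z \<noteq> 0 \<longrightarrow> ratfun p q z = c)"
  shows "p \<noteq> 0" "quot_deriv q 1 p \<noteq> 0"
proof -
  show "p \<noteq> 0"
    using assms(2) by (auto simp: ratfun_def)
  show "quot_deriv q 1 p \<noteq> 0"
  proof
    assume "quot_deriv q 1 p = 0"
    then obtain c where "p = smult c q"
      using assms(1) \<open>p \<noteq> 0\<close> quot_deriv_1_eq_0_imp_smult by blast
    then have "\<forall>z. poly q z \<noteq> 0 \<longrightarrow> ratfun p q z = c"
      by (simp add: ratfun_def)
    then show False
      using assms(2) by blast
  qed
qed

lemma order_diff_lt:
  assumes "[:-a, 1:] ^ n dvd A" "\<omega> \<noteq> 0" "degree \<omega> < n" "poly Q a \<noteq> 0"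
  shows "order a (A - \<omega> * Q) < n"
proof (rule ccontr)
  assume "\<not> order a (A - \<omega> * Q) < n"
  then have "[:-a, 1:] ^ n dvd A - \<omega> * Q"
    by (simp add: order_divides)
  from dvd_diff[OF assms(1) this] have "[:-a, 1:] ^ n dvd \<omega> * Q"
    by simp
  moreover have "Q \<noteq> 0"
    using assms(4) by auto
  then have "order a (\<omega> * Q) = order a \<omega>"
    using assms(2,4) by (simp add: order_mult order_0I)
  ultimately have "[:-a, 1:] ^ n dvd \<omega>"
    using assms(2) \<open>Q \<noteq> 0\<close> by (simp add: order_divides)
  from dvd_imp_degree_le[OF this assms(2)] show False
    using assms(3) degree_linear_power[of "-a" n] by simp
qed

lemma power_dvd_cofactor:
  fixes p Y R E Q V :: "complex poly"
  assumes "Y * R = E * Q * V" "Y \<noteq> 0" "R \<noteq> 0" "p \<noteq> 0" "p ^ n dvd Y"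
    and "\<And>z. poly p z = 0 \<Longrightarrow> order z E \<le> order z R \<and> poly Q z \<noteq> 0"
  shows "p ^ n dvd V"
proof (rule dvd_if_order_le)
  have "E * Q * V \<noteq> 0"
    using assms(1-3) by (simp flip: assms(1))
  then have nz: "E \<noteq> 0" "Q \<noteq> 0" "V \<noteq> 0"
    by auto
  then show "V \<noteq> 0" "p ^ n \<noteq> 0"
    using assms(4) by auto
  fix z
  show "order z (p ^ n) \<le> order z V"
  proof (cases "poly p z = 0")
    case True
    have "order z Y + order z R = order z E + order z Q + order z V"
      using arg_cong[OF assms(1), of "order z"] assms(2,3) nz by (simp add: order_mult)
    then show ?thesis
      using assms(6)[OF True] dvd_imp_order_le[OF assms(2,5), of z] by (simp add: order_0I)
  qed (simp add: order_0I)
qed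

section \<open>Excluding a single zero\<close>

locale Pdiff_single_zero =
  fixes k :: nat and l m :: "nat \<Rightarrow> nat" and \<omega> p q :: "complex poly" and a :: complex
  assumes m_le_l: "\<forall>i\<in>{1..k}. m i \<le> l i"
    and M_less_L: "(\<Sum>i=1..k. m i) < (\<Sum>i=1..k. l i)"
    and M_pos: "0 < (\<Sum>i=1..k. m i)"
    and \<omega>_nonzero: "\<omega> \<noteq> 0"
    and degree_\<omega>: "degree \<omega> < l 0"
    and q_nonzero: "q \<noteq> 0"
    and coprime_pq: "coprime p q"
    and p_nonzero: "p \<noteq> 0"
    and quot_deriv_p: "quot_deriv q 1 p \<noteq> 0"
    and order_poles: "\<And>z. poly q z = 0 \<Longrightarrow> l 0 \<le> order z q"
    and single_zero:
      "\<And>z. poly q z \<noteq> 0 \<Longrightarrow> poly (Pdiff_numer k l m p q - \<omega> * q ^ Pdiff_weight k l m) z = 0 \<Longrightarrow> z = a"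
begin

abbreviation "S \<equiv> Pdiff_weight k l m"
abbreviation "A \<equiv> Pdiff_numer k l m p q"
abbreviation "E \<equiv> A - \<omega> * q ^ S"
abbreviation "Y \<equiv> higher_quot_deriv q A S (l 0)"
abbreviation "T \<equiv> insert a {z. poly q z = 0}"

lemma Y_nonzero: "Y \<noteq> 0"
  using higher_quot_deriv_Pdiff_numer_nonzero[OF p_nonzero q_nonzero quot_deriv_p m_le_l M_less_L M_pos] .

lemma Y_eq: "Y = higher_quot_deriv q E S (l 0)"
  using higher_quot_deriv_diff_low_degree[OF degree_\<omega>] by simp

lemma E_nonzero: "E \<noteq> 0"
  using Y_nonzero Y_eq by auto

lemma finite_T: "finite T"
  using poly_roots_finite[OF q_nonzero] by simp

lemma card_T: "l 0 * card T \<le> degree q + l 0"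
proof -
  have "l 0 * card {z. poly q z = 0} = (\<Sum>z | poly q z = 0. l 0)"
    by simp
  also have "\<dots> \<le> (\<Sum>z | poly q z = 0. order z q)"
    by (rule sum_mono) (simp add: order_poles)
  also have "\<dots> \<le> degree q"
    by (rule sum_order_le_degree[OF q_nonzero])
  moreover have "card T \<le> card {z. poly q z = 0} + 1"
    using finite_T by (simp add: card_insert_if)
  ultimately show ?thesis
    using mult_le_mono2[of "card T" "card {z. poly q z = 0} + 1" "l 0"] by simp
qed

lemma E_q_dvd: "E * q ^ l 0 dvd Y * vanishing_poly T ^ l 0"
proof -
  have "E dvd pderiv E * vanishing_poly T"
    using single_zero by (intro dvd_pderiv_mult_vanishing_poly finite_T E_nonzero) auto
  moreover have "q dvd pderiv q * vanishing_poly T"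
    by (intro dvd_pderiv_mult_vanishing_poly finite_T q_nonzero) auto
  ultimately show ?thesis
    unfolding Y_eq by (rule mult_power_dvd_higher_quot_deriv)
qed

lemma order_E_at_zero_of_p:
  assumes "poly p z = 0"
  shows "order z E \<le> l 0 * order z (vanishing_poly T)"
proof -
  have qz: "poly q z \<noteq> 0"
    using coprime_poly_0[OF coprime_pq] assms by blast
  show ?thesis
  proof (cases "z = a")
    case True
    have "[:-z, 1:] dvd p"
      using assms by (simp add: poly_eq_0_iff_dvd)
    then have "[:-z, 1:] ^ l 0 dvd p ^ l 0"
      by (rule dvd_power_same)
    also have "\<dots> dvd p ^ (l 0 + (\<Sum>i=1..k. l i - m i))"
      by (rule le_imp_power_dvd) simp
    also have "\<dots> dvd A"
      by (rule power_dvd_Pdiff_numer)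
    finally have "[:-z, 1:] ^ l 0 dvd A" .
    moreover have "poly (q ^ S) z \<noteq> 0"
      using qz by simp
    ultimately have "order z E < l 0"
      by (intro order_diff_lt \<omega>_nonzero degree_\<omega>)
    moreover have "1 \<le> order z (vanishing_poly T)"
      using True finite_T by (intro order_vanishing_poly) auto
    ultimately show ?thesis
      using mult_le_mono2[of 1 "order z (vanishing_poly T)" "l 0"] by linarith
  next
    case False
    then have "poly E z \<noteq> 0"
      using single_zero qz by blast
    then show ?thesis
      by (simp add: order_0I)
  qed
qed

lemma cofactor:
  obtains V where "Y * vanishing_poly T ^ l 0 = E * q ^ l 0 * V"
    and "p ^ (\<Sum>i=1..k. l i - m i) dvd V"
proof -
  obtain V where V: "Y * vanishing_poly T ^ l 0 = E * q ^ l 0 * V"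
    using E_q_dvd by blast
  have "p ^ (l 0 + (\<Sum>i=1..k. l i - m i)) dvd A"
    by (rule power_dvd_Pdiff_numer)
  from power_dvd_higher_quot_deriv[OF this, where j = "l 0" and q = q and s = S]
  have "p ^ (\<Sum>i=1..k. l i - m i) dvd Y"
    by simp
  moreover have "order z E \<le> order z (vanishing_poly T ^ l 0) \<and> poly (q ^ l 0) z \<noteq> 0"
    if "poly p z = 0" for z
  proof
    show "order z E \<le> order z (vanishing_poly T ^ l 0)"
      using order_E_at_zero_of_p[OF that] order_power[OF vanishing_poly_nonzero[OF finite_T]]
      by simp
    show "poly (q ^ l 0) z \<noteq> 0"
      using coprime_poly_0[OF coprime_pq, of z] that by simp
  qed
  ultimately have "p ^ (\<Sum>i=1..k. l i - m i) dvd V"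
    using Y_nonzero vanishing_poly_nonzero[OF finite_T] p_nonzero
    by (intro power_dvd_cofactor[OF V]) simp_all
  with V show ?thesis
    using that by blast
qed

lemma degree_cofactor:
  assumes "Y * vanishing_poly T ^ l 0 = E * q ^ l 0 * V"
  shows "V \<noteq> 0" "degree V \<le> degree q" "degree V + degree E \<le> degree A + degree q"
proof -
  show "V \<noteq> 0"
    using assms Y_nonzero vanishing_poly_nonzero[OF finite_T] by auto
  then have "degree Y + l 0 * card T = degree E + l 0 * degree q + degree V"
    using arg_cong[OF assms, of degree] Y_nonzero E_nonzero q_nonzero finite_T
      vanishing_poly_nonzero[OF finite_T]
    by (simp add: degree_mult_eq degree_power_eq degree_vanishing_poly)
  moreover have "degree Y + l 0 \<le> degree E + l 0 * degree q"
    using degree_higher_quot_deriv_le[of q E S "l 0"] Y_nonzero Y_eq by simp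
  moreover have "degree Y + l 0 \<le> degree A + l 0 * degree q"
    using degree_higher_quot_deriv_le[of q A S "l 0"] Y_nonzero by simp
  ultimately show "degree V \<le> degree q" "degree V + degree E \<le> degree A + degree q"
    using card_T by linarith+
qed

lemma single_zero_impossible: False
proof -
  let ?L = "\<Sum>i=1..k. l i" and ?M = "\<Sum>i=1..k. m i" and ?N = "\<Sum>i=1..k. l i - m i"
  obtain V where V: "Y * vanishing_poly T ^ l 0 = E * q ^ l 0 * V" and "p ^ ?N dvd V"
    by (rule cofactor)
  have V_big: "?N * degree p \<le> degree V"
    using dvd_imp_degree_le[OF \<open>p ^ ?N dvd V\<close> degree_cofactor(1)[OF V]] p_nonzero
    by (simp add: degree_power_eq)
  have NM: "?L = ?N + ?M"
    using m_le_l by (simp add: sum.distrib[symmetric])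
  show False
  proof (cases "degree q < degree p")
    case True
    have "degree p \<le> ?N * degree p"
      using NM M_less_L by simp
    then show False
      using True V_big degree_cofactor(2)[OF V] by linarith
  next
    case False
    have le: "l 0 * degree p \<le> l 0 * degree q" "?N * degree p \<le> ?N * degree q"
      "?M * degree p \<le> ?M * degree q"
      using False by simp_all
    have N_pos: "degree q \<le> ?N * degree q"
      using NM M_less_L by simp
    have A_le: "degree A + ?M \<le> l 0 * degree p + ?N * degree p + ?M * degree p + ?M * degree q"
      using degree_Pdiff_numer_le[OF p_nonzero q_nonzero quot_deriv_p m_le_l]
      unfolding NM distrib_right by linarith
    have S: "S * degree q = l 0 * degree q + ?N * degree q + ?M * degree q + ?M * degree q"
      unfolding Pdiff_weight_def NM distrib_right by linarith
    have deg_\<omega>q: "degree (\<omega> * q ^ S) = degree \<omega> + S * degree q"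
      using \<omega>_nonzero q_nonzero by (simp add: degree_mult_eq degree_power_eq)
    then have "degree A < degree (\<omega> * q ^ S)"
      using A_le S le M_pos by linarith
    then have "degree E = degree \<omega> + S * degree q"
      using degree_add_eq_right[of A "- (\<omega> * q ^ S)"] deg_\<omega>q by simp
    then show False
      using degree_cofactor(3)[OF V] V_big A_le S le N_pos M_pos by linarith
  qed
qed

end

theorem theorem2p2:
  fixes k :: nat and l m :: "nat \<Rightarrow> nat" and \<omega> p q :: "complex poly"
  assumes "k \<ge> 1"
    and "l 0 > 0"
    and "\<forall>i\<in>{1..k}. m i \<le> l i"
    and "(\<Sum>i=1..k. l i) > (\<Sum>i=1..k. m i)"
    and "(\<Sum>i=1..k. m i) > 0"
    and "\<omega> \<noteq> 0" and "degree \<omega> < l 0"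
    and "q \<noteq> 0" and "coprime p q"
    and "\<not> (\<exists>c. \<forall>z. poly q z \<noteq> 0 \<longrightarrow> ratfun p q z = c)"
    and "\<forall>z. poly q z = 0 \<longrightarrow> order z q \<ge> l 0"
  shows "\<exists>z1 z2. z1 \<noteq> z2 \<and> poly q z1 \<noteq> 0 \<and> poly q z2 \<noteq> 0 \<and>
           Pdiff k l m (ratfun p q) z1 = poly \<omega> z1 \<and>
           Pdiff k l m (ratfun p q) z2 = poly \<omega> z2"
proof (rule ccontr)
  assume no_two_zeros: "\<not> ?thesis"
  let ?E = "Pdiff_numer k l m p q - \<omega> * q ^ Pdiff_weight k l m"
  have "Pdiff k l m (ratfun p q) z = poly \<omega> z \<longleftrightarrow> poly ?E z = 0" if "poly q z \<noteq> 0" for z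
    using that by (simp add: Pdiff_ratfun divide_eq_eq)
  then obtain a where "\<And>z. poly q z \<noteq> 0 \<Longrightarrow> poly ?E z = 0 \<Longrightarrow> z = a"
    using no_two_zeros by metis
  then interpret Pdiff_single_zero k l m \<omega> p q a
    using assms ratfun_nonconstant[OF assms(8,10)] by unfold_locales auto
  show False
    by (rule single_zero_impossible)
qed

end
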